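(* In the category of pointed Frölicher spaces, for any basepoint-preserving smooth map $f:X\to Y$ the sequence $X\xrightarrow{f}Y\xrightarrow{l}\mathbf T_f$ is right exact, where $l(y)=[y]$ is the inclusion of $Y$ into the flattened mapping cone; that is, for every pointed Frölicher space $W$ the sequence of pointed sets $[\mathbf T_f,W]\xrightarrow{l^*}[Y,W]\xrightarrow{f^*}[X,W]$ is exact.
   Context: A Frölicher space is a triple $(X,\mathcal C_X,\mathcal F_X)$ with $\mathcal C_X\subseteq X^{\mathbb R}$, $\mathcal F_X\subseteq\mathbb R^X$, such that $\mathcal F_X=\{f\mid f\circ c\in C^\infty(\mathbb R,\mathbb R)\ \forall c\in\mathcal C_X\}$ and $\mathcal C_X=\{c\mid f\circ c\in C^\infty(\mathbb R,\mathbb R)\ \forall f\in\mathcal F_X\}$. Smooth maps: $g\circ\varphi\in\mathcal F_X$ for all $g\in\mathcal F_Y$. Subspaces carry the initial structure, products the structure generated by $f\circ\pi_i$, coproducts, quotients and pushouts the final structure. $I$ is $[0,1]$ with the subspace structure from $\mathbb R$; $\mathbf I$ is $[0,1]$ with the structure generated by those structure functions of $I$ that are constant on $[0,\epsilon)$ and on $(1-\epsilon,1]$ for some $0<\epsilon<1/4$. The flattened mapping cylinder $\mathbf I_f$ is the quotient of $(\mathbf I\times X)\sqcup Y$ by $(1,x)\sim f(x)$, elements $[t,x]$, $[y]$. In the pointed setting (basepoint $x_0\in X$), the flattened mapping cone $\mathbf T_f$ is the quotient of $\mathbf I_f$ collapsing $(\{0\}\times X)\cup(\mathbf I\times\{x_0\})$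 to a point, which is its basepoint. For pointed $X,W$, $[X,W]$ is the set of basepoint-preserving smooth maps modulo pointed smooth homotopy (smooth $H:I\times X\to W$ with $H(t,x_0)=w_0$), pointed by the class of the constant map; $g^*$ is precomposition with $g$; exactness at the middle means $\operatorname{im}l^*=(f^* )^{-1}(\ast)$. *)

theory Defs
  imports Complex_Main
begin

definition smooth_real :: "(real \<Rightarrow> real) \<Rightarrow> bool" where
  "smooth_real g \<longleftrightarrow>
     (\<exists>D :: nat \<Rightarrow> real \<Rightarrow> real. D 0 = g \<and>
        (\<forall>n x. (D n has_real_derivative D (Suc n) x) (at x)))"

text \<open>A Froelicher structure on a carrier set: curves are maps real to carrier;
  structure functions are maps to real (only their values on the carrier matter).\<close>

record 'a frol =
  car :: "'a set"
  curves :: "(real \<Rightarrow> 'a) set"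
  funcs :: "('a \<Rightarrow> real) set"

definition curves_of :: "'a set \<Rightarrow> ('a \<Rightarrow> real) set \<Rightarrow> (real \<Rightarrow> 'a) set" where
  "curves_of A F0 = {c. (\<forall>t. c t \<in> A) \<and> (\<forall>f\<in>F0. smooth_real (f \<circ> c))}"

definition funcs_of :: "(real \<Rightarrow> 'a) set \<Rightarrow> ('a \<Rightarrow> real) set" where
  "funcs_of C0 = {f. \<forall>c\<in>C0. smooth_real (f \<circ> c)}"

definition frolicher :: "'a frol \<Rightarrow> bool" where
  "frolicher S \<longleftrightarrow> funcs S = funcs_of (curves S) \<and> curves S = curves_of (car S) (funcs S)"

definition gen_by_funcs :: "'a set \<Rightarrow> ('a \<Rightarrow> real) set \<Rightarrow> 'a frol" where
  "gen_by_funcs A F0 = \<lparr>car = A, curves = curves_of A F0, funcs = funcs_of (curves_of A F0)\<rparr>"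

definition gen_by_curves :: "'a set \<Rightarrow> (real \<Rightarrow> 'a) set \<Rightarrow> 'a frol" where
  "gen_by_curves A C0 = \<lparr>car = A, curves = curves_of A (funcs_of C0), funcs = funcs_of C0\<rparr>"

definition smooth_map :: "'a frol \<Rightarrow> 'b frol \<Rightarrow> ('a \<Rightarrow> 'b) \<Rightarrow> bool" where
  "smooth_map X Y \<phi> \<longleftrightarrow> (\<forall>x\<in>car X. \<phi> x \<in> car Y) \<and> (\<forall>g\<in>funcs Y. g \<circ> \<phi> \<in> funcs X)"

definition real_frol :: "real frol" where
  "real_frol = gen_by_funcs UNIV {id}"

definition subspace :: "'a frol \<Rightarrow> 'a set \<Rightarrow> 'a frol" where
  "subspace X A = gen_by_funcs A (funcs X)"

definition product :: "'a frol \<Rightarrow> 'b frol \<Rightarrow> ('a \<times> 'b) frol" where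
  "product X Y = gen_by_funcs (car X \<times> car Y)
     ({f \<circ> fst | f. f \<in> funcs X} \<union> {g \<circ> snd | g. g \<in> funcs Y})"

definition coproduct :: "'a frol \<Rightarrow> 'b frol \<Rightarrow> ('a + 'b) frol" where
  "coproduct X Y = gen_by_curves (Inl ` car X \<union> Inr ` car Y)
     ({Inl \<circ> c | c. c \<in> curves X} \<union> {Inr \<circ> c | c. c \<in> curves Y})"

definition quotient_frol :: "'a frol \<Rightarrow> 'a rel \<Rightarrow> 'a set frol" where
  "quotient_frol X R = gen_by_curves (car X // R) {(\<lambda>t. R `` {c t}) | c. c \<in> curves X}"

definition equiv_closure :: "'a set \<Rightarrow> 'a rel \<Rightarrow> 'a rel" where
  "equiv_closure S R0 = Id_on S \<union> (R0 \<union> R0\<inverse>)\<^sup>+"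

definition unit_I :: "real frol" where
  "unit_I = subspace real_frol {0..1}"

definition flat_I :: "real frol" where
  "flat_I = gen_by_funcs {0..1}
     {f \<in> funcs unit_I. \<exists>\<epsilon>. 0 < \<epsilon> \<and> \<epsilon> < 1/4 \<and>
        (\<forall>s\<in>{0..<\<epsilon>}. \<forall>t\<in>{0..<\<epsilon>}. f s = f t) \<and>
        (\<forall>s\<in>{1-\<epsilon><..1}. \<forall>t\<in>{1-\<epsilon><..1}. f s = f t)}"

definition cyl_pre :: "'a frol \<Rightarrow> 'b frol \<Rightarrow> ((real \<times> 'a) + 'b) frol" where
  "cyl_pre X Y = coproduct (product flat_I X) Y"

definition cyl_rel :: "'a frol \<Rightarrow> 'b frol \<Rightarrow> ('a \<Rightarrow> 'b) \<Rightarrow> ((real \<times> 'a) + 'b) rel" where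
  "cyl_rel X Y f = equiv_closure (car (cyl_pre X Y)) {(Inl (1, x), Inr (f x)) | x. x \<in> car X}"

definition mapping_cyl :: "'a frol \<Rightarrow> 'b frol \<Rightarrow> ('a \<Rightarrow> 'b) \<Rightarrow> ((real \<times> 'a) + 'b) set frol" where
  "mapping_cyl X Y f = quotient_frol (cyl_pre X Y) (cyl_rel X Y f)"

definition cyl_class :: "'a frol \<Rightarrow> 'b frol \<Rightarrow> ('a \<Rightarrow> 'b) \<Rightarrow> ((real \<times> 'a) + 'b) \<Rightarrow> ((real \<times> 'a) + 'b) set" where
  "cyl_class X Y f z = cyl_rel X Y f `` {z}"

definition cone_base :: "'a frol \<Rightarrow> 'b frol \<Rightarrow> ('a \<Rightarrow> 'b) \<Rightarrow> 'a \<Rightarrow> ((real \<times> 'a) + 'b) set set" where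
  "cone_base X Y f x0 = {cyl_class X Y f (Inl (0, x)) | x. x \<in> car X}
                      \<union> {cyl_class X Y f (Inl (t, x0)) | t. t \<in> {0..1}}"

definition cone_rel :: "'a frol \<Rightarrow> 'b frol \<Rightarrow> ('a \<Rightarrow> 'b) \<Rightarrow> 'a \<Rightarrow> ((real \<times> 'a) + 'b) set rel" where
  "cone_rel X Y f x0 = Id_on (car (mapping_cyl X Y f)) \<union> cone_base X Y f x0 \<times> cone_base X Y f x0"

definition mapping_cone :: "'a frol \<Rightarrow> 'b frol \<Rightarrow> ('a \<Rightarrow> 'b) \<Rightarrow> 'a \<Rightarrow> ((real \<times> 'a) + 'b) set set frol" where
  "mapping_cone X Y f x0 = quotient_frol (mapping_cyl X Y f) (cone_rel X Y f x0)"

definition cone_pt :: "'a frol \<Rightarrow> 'b frol \<Rightarrow> ('a \<Rightarrow> 'b) \<Rightarrow> 'a \<Rightarrow> ((real \<times> 'a) + 'b) set set" where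
  "cone_pt X Y f x0 = cone_rel X Y f x0 `` {cyl_class X Y f (Inl (0, x0))}"

definition cone_incl :: "'a frol \<Rightarrow> 'b frol \<Rightarrow> ('a \<Rightarrow> 'b) \<Rightarrow> 'a \<Rightarrow> 'b \<Rightarrow> ((real \<times> 'a) + 'b) set set" where
  "cone_incl X Y f x0 y = cone_rel X Y f x0 `` {cyl_class X Y f (Inr y)}"

definition pointed_maps :: "'a frol \<Rightarrow> 'a \<Rightarrow> 'w frol \<Rightarrow> 'w \<Rightarrow> ('a \<Rightarrow> 'w) set" where
  "pointed_maps X x0 W w0 = {\<phi>. smooth_map X W \<phi> \<and> \<phi> x0 = w0}"

definition pointed_homotopic :: "'a frol \<Rightarrow> 'a \<Rightarrow> 'w frol \<Rightarrow> 'w \<Rightarrow> ('a \<Rightarrow> 'w) \<Rightarrow> ('a \<Rightarrow> 'w) \<Rightarrow> bool" where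
  "pointed_homotopic X x0 W w0 \<phi> \<psi> \<longleftrightarrow>
     (\<exists>H. smooth_map (product unit_I X) W H \<and>
          (\<forall>x\<in>car X. H (0, x) = \<phi> x \<and> H (1, x) = \<psi> x) \<and>
          (\<forall>t\<in>{0..1}. H (t, x0) = w0))"

definition htpy_class :: "'a frol \<Rightarrow> 'a \<Rightarrow> 'w frol \<Rightarrow> 'w \<Rightarrow> ('a \<Rightarrow> 'w) \<Rightarrow> ('a \<Rightarrow> 'w) set" where
  "htpy_class X x0 W w0 \<phi> = {\<psi> \<in> pointed_maps X x0 W w0. pointed_homotopic X x0 W w0 \<phi> \<psi>}"

definition htpy_set :: "'a frol \<Rightarrow> 'a \<Rightarrow> 'w frol \<Rightarrow> 'w \<Rightarrow> ('a \<Rightarrow> 'w) set set" where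
  "htpy_set X x0 W w0 = htpy_class X x0 W w0 ` pointed_maps X x0 W w0"

definition induced :: "'a frol \<Rightarrow> 'a \<Rightarrow> 'w frol \<Rightarrow> 'w \<Rightarrow> ('a \<Rightarrow> 'b) \<Rightarrow> ('b \<Rightarrow> 'w) set \<Rightarrow> ('a \<Rightarrow> 'w) set" where
  "induced X x0 W w0 g K = htpy_class X x0 W w0 ((SOME \<phi>. \<phi> \<in> K) \<circ> g)"

end

theory Submission
  imports Defs "HOL-Computational_Algebra.Polynomial"
begin

(* Exactness at [Y,W] consists of two inclusions.
   (1) im l^* is contained in ker f^*: the map (t,x) |-> [t,x] from I x X into the flattened
       mapping cone T_f is smooth (every smooth curve of I is a smooth curve of the flattened
       interval) and is a pointed homotopy from the constant map to l o f.  Hence Phi o l o f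
       is null-homotopic for every pointed Phi : T_f -> W.
   (2) ker f^* is contained in im l^*: given chi : Y -> W and a pointed homotopy H from chi o f
       to the constant map, the map  [t,x] |-> H(m t, x),  [y] |-> chi y  is a well defined
       smooth pointed map T_f -> W extending chi.  Here m (cutoff) is a smooth function, constant near
       both ends of the interval, with m 0 = 1 and m 1 = 0; it turns the bold interval into the
       ordinary one, which is exactly why the flattened cylinder is used. *)


section \<open>Smooth real functions\<close>

text \<open>Smoothness is n-fold differentiability for every n; the closure properties of smooth
  functions are proved for each n by induction.\<close>

fun n_diff :: "nat \<Rightarrow> (real \<Rightarrow> real) \<Rightarrow> bool" where
  "n_diff 0 g = True"
| "n_diff (Suc n) g = (\<exists>g'. (\<forall>x. (g has_real_derivative g' x) (at x)) \<and> n_diff n g')"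

lemma n_diff_Suc_imp: "n_diff (Suc n) g \<Longrightarrow> n_diff n g"
proof (induction n arbitrary: g)
  case (Suc n)
  then obtain g' where "\<forall>x. (g has_real_derivative g' x) (at x)" "n_diff (Suc n) g'" by auto
  with Suc.IH show ?case by auto
qed simp

text \<open>For the converse direction the tower of derivatives is built by iterating a chosen
  derivative operator, which is well defined on everywhere differentiable functions.\<close>
lemma smooth_real_iff_n_diff: "smooth_real g \<longleftrightarrow> (\<forall>n. n_diff n g)"
proof
  assume "smooth_real g"
  then obtain D :: "nat \<Rightarrow> real \<Rightarrow> real" where D: "D 0 = g"
    "\<forall>n x. (D n has_real_derivative D (Suc n) x) (at x)"
    unfolding smooth_real_def by auto
  have "\<forall>k. n_diff n (D k)" for n
    by (induction n) (use D in auto)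
  then show "\<forall>n. n_diff n g" using D by metis
next
  assume all: "\<forall>n. n_diff n g"
  define der :: "(real \<Rightarrow> real) \<Rightarrow> real \<Rightarrow> real"
    where "der h x = (SOME d. (h has_real_derivative d) (at x))" for h x
  have der: "der h x = d" if "(h has_real_derivative d) (at x)" for h x d
    unfolding der_def using that DERIV_unique by blast
  define D :: "nat \<Rightarrow> real \<Rightarrow> real" where "D k = (der ^^ k) g" for k
  have D_deriv: "(D k has_real_derivative D (Suc k) x) (at x)" if "\<forall>n. n_diff n (D k)" for k x
  proof -
    have "n_diff (Suc 0) (D k)" using that by blast
    then obtain g' where "\<forall>x. (D k has_real_derivative g' x) (at x)" by auto
    moreover have "D (Suc k) x = der (D k) x" by (simp add: D_def)
    ultimately show ?thesis using der by metis
  qed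
  have "\<forall>n. n_diff n (D k)" for k
  proof (induction k)
    case 0 then show ?case using all by (simp add: D_def)
  next
    case (Suc k)
    show ?case
    proof
      fix n
      obtain g' where g': "\<forall>x. (D k has_real_derivative g' x) (at x)" "n_diff n g'"
        using Suc[rule_format, of "Suc n"] by auto
      have "g' = D (Suc k)" using g'(1) D_deriv[OF Suc] DERIV_unique by (metis ext)
      then show "n_diff n (D (Suc k))" using g'(2) by simp
    qed
  qed
  then show "smooth_real g" unfolding smooth_real_def
    using D_deriv by (intro exI[of _ D]) (simp add: D_def)
qed

lemma n_diff_const: "n_diff n (\<lambda>x. c)"
proof (induction n arbitrary: c)
  case (Suc n) then show ?case by (auto intro!: exI[of _ "\<lambda>x. 0"])
qed simp

lemma n_diff_id: "n_diff n (\<lambda>x. x)"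
  by (cases n) (auto intro!: exI[of _ "\<lambda>x. 1"] n_diff_const)

lemma n_diff_add: "n_diff n f \<Longrightarrow> n_diff n g \<Longrightarrow> n_diff n (\<lambda>x. f x + g x)"
proof (induction n arbitrary: f g)
  case (Suc n)
  then obtain f' g' where "\<forall>x. (f has_real_derivative f' x) (at x)" "n_diff n f'"
     "\<forall>x. (g has_real_derivative g' x) (at x)" "n_diff n g'" by auto
  with Suc.IH show ?case by (auto intro!: exI[of _ "\<lambda>x. f' x + g' x"] derivative_intros)
qed simp

lemma n_diff_mult: "n_diff n f \<Longrightarrow> n_diff n g \<Longrightarrow> n_diff n (\<lambda>x. f x * g x)"
proof (induction n arbitrary: f g)
  case (Suc n)
  then obtain f' g' where d: "\<forall>x. (f has_real_derivative f' x) (at x)" "n_diff n f'"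
     "\<forall>x. (g has_real_derivative g' x) (at x)" "n_diff n g'" by auto
  have "n_diff n (\<lambda>x. f' x * g x + f x * g' x)"
    using Suc n_diff_Suc_imp d n_diff_add by auto
  moreover have "\<forall>x. ((\<lambda>x. f x * g x) has_real_derivative (f' x * g x + f x * g' x)) (at x)"
    using d by (auto intro!: derivative_eq_intros)
  ultimately show ?case by auto
qed simp

text \<open>Chain rule: the derivative of g o c is (g' o c) * c', again n times differentiable.\<close>
lemma n_diff_comp: "n_diff n g \<Longrightarrow> n_diff n c \<Longrightarrow> n_diff n (\<lambda>x. g (c x))"
proof (induction n arbitrary: g c)
  case (Suc n)
  then obtain g' c' where d: "\<forall>x. (g has_real_derivative g' x) (at x)" "n_diff n g'"
     "\<forall>x. (c has_real_derivative c' x) (at x)" "n_diff n c'" by auto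
  have "n_diff n (\<lambda>x. g' (c x) * c' x)"
    using Suc n_diff_Suc_imp d n_diff_mult by auto
  moreover have "\<forall>x. ((\<lambda>x. g (c x)) has_real_derivative (g' (c x) * c' x)) (at x)"
    using d by (metis DERIV_chain2)
  ultimately show ?case by auto
qed simp

lemma n_diff_inverse: "n_diff n g \<Longrightarrow> (\<forall>x. g x \<noteq> 0) \<Longrightarrow> n_diff n (\<lambda>x. 1 / g x)"
proof (induction n arbitrary: g)
  case (Suc n)
  then obtain g' where d: "\<forall>x. (g has_real_derivative g' x) (at x)" "n_diff n g'" by auto
  have inv: "n_diff n (\<lambda>x. 1 / g x)" using Suc n_diff_Suc_imp by auto
  have "n_diff n (\<lambda>x. - 1 * g' x * (1 / g x) * (1 / g x))"
    using n_diff_mult[OF n_diff_mult[OF n_diff_mult[OF n_diff_const d(2)] inv] inv] .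
  moreover have "\<forall>x. ((\<lambda>x. 1 / g x) has_real_derivative (- 1 * g' x * (1 / g x) * (1 / g x))) (at x)"
    using d Suc.prems(2) by (auto intro!: derivative_eq_intros simp: power2_eq_square field_simps)
  ultimately show ?case by auto
qed simp

lemma smooth_const: "smooth_real (\<lambda>x. c)"
  by (simp add: smooth_real_iff_n_diff n_diff_const)

lemma smooth_add: "smooth_real f \<Longrightarrow> smooth_real g \<Longrightarrow> smooth_real (\<lambda>x. f x + g x)"
  by (simp add: smooth_real_iff_n_diff n_diff_add)

lemma smooth_mult: "smooth_real f \<Longrightarrow> smooth_real g \<Longrightarrow> smooth_real (\<lambda>x. f x * g x)"
  by (simp add: smooth_real_iff_n_diff n_diff_mult)

lemma smooth_comp: "smooth_real g \<Longrightarrow> smooth_real c \<Longrightarrow> smooth_real (\<lambda>x. g (c x))"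
  by (simp add: smooth_real_iff_n_diff n_diff_comp)

lemma smooth_inverse: "smooth_real g \<Longrightarrow> (\<forall>x. g x \<noteq> 0) \<Longrightarrow> smooth_real (\<lambda>x. 1 / g x)"
  by (simp add: smooth_real_iff_n_diff n_diff_inverse)

lemma smooth_id: "smooth_real (\<lambda>x. x)"
  by (simp add: smooth_real_iff_n_diff n_diff_id)

lemma smooth_affine: "smooth_real (\<lambda>x. a * x + b)"
  using smooth_add[OF smooth_mult[OF smooth_const smooth_id] smooth_const] by simp

lemma smooth_continuous: "smooth_real g \<Longrightarrow> continuous_on UNIV g"
  unfolding smooth_real_def by (metis DERIV_isCont continuous_at_imp_continuous_on)

lemma smooth_local:
  assumes "open U" "open V" "U \<union> V = UNIV" "smooth_real g1" "smooth_real g2"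
    "\<forall>x\<in>U. f x = g1 x" "\<forall>x\<in>V. f x = g2 x"
  shows "smooth_real f"
proof -
  obtain D1 where D1: "D1 0 = g1" "\<forall>n x. (D1 n has_real_derivative D1 (Suc n) x) (at x)"
    using assms(4) unfolding smooth_real_def by auto
  obtain D2 where D2: "D2 0 = g2" "\<forall>n x. (D2 n has_real_derivative D2 (Suc n) x) (at x)"
    using assms(5) unfolding smooth_real_def by auto
  have agree: "\<forall>x\<in>U\<inter>V. D1 n x = D2 n x" for n
  proof (induction n)
    case 0 then show ?case using assms D1 D2 by auto
  next
    case (Suc n)
    show ?case
    proof
      fix x assume x: "x \<in> U \<inter> V"
      have "(D2 n has_real_derivative D1 (Suc n) x) (at x)"
        using has_field_derivative_transform_within_open[OF D1(2)[rule_format, of n x] _ x]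
          Suc assms(1,2) by blast
      then show "D1 (Suc n) x = D2 (Suc n) x" using D2(2) DERIV_unique by blast
    qed
  qed
  define D where "D n x = (if x \<in> U then D1 n x else D2 n x)" for n x
  have "D 0 = f" using assms D1 D2 by (auto simp: D_def fun_eq_iff)
  moreover have "(D n has_real_derivative D (Suc n) x) (at x)" for n x
  proof (cases "x \<in> U")
    case True
    then show ?thesis
      using has_field_derivative_transform_within_open[OF D1(2)[rule_format, of n x] assms(1) True]
      by (simp add: D_def)
  next
    case False
    then have xV: "x \<in> V" using assms(3) by auto
    have "\<And>y. y \<in> V \<Longrightarrow> D2 n y = D n y" using agree by (auto simp: D_def)
    then show ?thesis
      using has_field_derivative_transform_within_open[OF D2(2)[rule_format, of n x] assms(2) xV] False
      by (simp add: D_def)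
  qed
  ultimately show ?thesis unfolding smooth_real_def by blast
qed


section \<open>A smooth step function\<close>

text \<open>The classical flat function  x |-> exp(-1/x)  for x > 0, and 0 otherwise.  Its n-th
  derivative on the positive axis is  p_n(1/x) exp(-1/x)  with  p_(n+1) = X^2 (p_n - p_n').\<close>

definition flat_exp :: "real \<Rightarrow> real" where
  "flat_exp x = (if x > 0 then exp (- 1 / x) else 0)"

fun flat_exp_poly :: "nat \<Rightarrow> real poly" where
  "flat_exp_poly 0 = 1"
| "flat_exp_poly (Suc n) = [:0, 0, 1:] * (flat_exp_poly n - pderiv (flat_exp_poly n))"

definition flat_exp_deriv :: "nat \<Rightarrow> real \<Rightarrow> real" where
  "flat_exp_deriv n x = (if x > 0 then poly (flat_exp_poly n) (1 / x) * exp (- 1 / x) else 0)"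

lemma poly_times_exp_neg_tendsto_0: "((\<lambda>y. poly p y * exp (- y)) \<longlongrightarrow> (0::real)) at_top"
proof -
  have eq: "poly p y * exp (- y) = (\<Sum>i\<le>degree p. coeff p i * (y ^ i / exp y))" for y
    unfolding poly_altdef exp_minus by (simp add: sum_distrib_right divide_inverse mult.assoc)
  have "((\<lambda>y. \<Sum>i\<le>degree p. coeff p i * (y ^ i / exp y)) \<longlongrightarrow> (\<Sum>i\<le>degree p. coeff p i * 0)) at_top"
    by (intro tendsto_intros tendsto_power_div_exp_0)
  then show ?thesis by (simp add: eq)
qed

lemma flat_exp_deriv_pos:
  assumes "x > 0"
  shows "(flat_exp_deriv n has_real_derivative flat_exp_deriv (Suc n) x) (at x)"
proof -
  let ?p = "flat_exp_poly n"
  have "((\<lambda>x. poly ?p (1 / x) * exp (- 1 / x)) has_real_derivative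
     poly (pderiv ?p) (1 / x) * (- 1 / x^2) * exp (- 1 / x) + poly ?p (1 / x) * (exp (- 1 / x) * (1 / x^2))) (at x)"
    using assms
    by (auto intro!: derivative_eq_intros DERIV_chain2[OF poly_DERIV] simp: power2_eq_square field_simps)
  also have "poly (pderiv ?p) (1 / x) * (- 1 / x^2) * exp (- 1 / x) + poly ?p (1 / x) * (exp (- 1 / x) * (1 / x^2))
      = flat_exp_deriv (Suc n) x"
    using assms by (simp add: flat_exp_deriv_def algebra_simps power2_eq_square)
  finally show ?thesis
    by (rule has_field_derivative_transform_within_open[where S="{0<..}"])
       (use assms in \<open>auto simp: flat_exp_deriv_def\<close>)
qed

lemma flat_exp_deriv_neg:
  assumes "x < 0"
  shows "(flat_exp_deriv n has_real_derivative flat_exp_deriv (Suc n) x) (at x)"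
proof -
  have "((\<lambda>x. 0) has_real_derivative 0) (at x)" by simp
  then have "(flat_exp_deriv n has_real_derivative 0) (at x)"
    by (rule has_field_derivative_transform_within_open[where S="{..<0}"])
       (use assms in \<open>auto simp: flat_exp_deriv_def\<close>)
  then show ?thesis using assms by (simp add: flat_exp_deriv_def)
qed

text \<open>At 0 the difference quotient from the right is  q(1/h) exp(-1/h)  with q = X p_n,
  which tends to 0 because exponential decay beats polynomial growth.\<close>
lemma flat_exp_deriv_zero: "(flat_exp_deriv n has_real_derivative flat_exp_deriv (Suc n) 0) (at 0)"
proof -
  have "((\<lambda>h. (flat_exp_deriv n (0 + h) - flat_exp_deriv n 0) / h) \<longlongrightarrow> 0) (at 0)"
  proof (rule filterlim_split_at)
    show "((\<lambda>h. (flat_exp_deriv n (0 + h) - flat_exp_deriv n 0) / h) \<longlongrightarrow> 0) (at_left 0)"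
      by (rule Lim_transform_eventually[OF tendsto_const])
         (auto simp: flat_exp_deriv_def eventually_at_left_field intro!: exI[of _ "-1"])
    have "((\<lambda>h. poly (pCons 0 (flat_exp_poly n)) (inverse h) * exp (- inverse h)) \<longlongrightarrow> 0) (at_right 0)"
      by (rule filterlim_compose[OF poly_times_exp_neg_tendsto_0 filterlim_inverse_at_top_right])
    then show "((\<lambda>h. (flat_exp_deriv n (0 + h) - flat_exp_deriv n 0) / h) \<longlongrightarrow> 0) (at_right 0)"
      by (rule Lim_transform_eventually)
         (auto simp: flat_exp_deriv_def eventually_at_right_field field_simps intro!: exI[of _ 1])
  qed
  then show ?thesis by (simp add: DERIV_def flat_exp_deriv_def)
qed

lemma flat_exp_smooth: "smooth_real flat_exp"
proof -
  have "flat_exp_deriv 0 = flat_exp" by (auto simp: flat_exp_deriv_def flat_exp_def fun_eq_iff)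
  moreover have "(flat_exp_deriv n has_real_derivative flat_exp_deriv (Suc n) x) (at x)" for n x
    using flat_exp_deriv_pos flat_exp_deriv_neg flat_exp_deriv_zero by (cases x "0::real" rule: linorder_cases) auto
  ultimately show ?thesis unfolding smooth_real_def by blast
qed

definition smooth_step :: "real \<Rightarrow> real" where
  "smooth_step x = flat_exp (x - 1/4) / (flat_exp (x - 1/4) + flat_exp (3/4 - x))"

lemma smooth_step_denominator_pos: "flat_exp (x - 1/4) + flat_exp (3/4 - x) > 0"
  by (cases "x > 1/4") (auto simp: flat_exp_def add_pos_nonneg add_nonneg_pos)

lemma smooth_step_smooth: "smooth_real smooth_step"
proof -
  have left: "smooth_real (\<lambda>x. flat_exp (x - 1/4))"
    using smooth_comp[OF flat_exp_smooth smooth_affine[of 1 "-1/4"]] by simp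
  have right: "smooth_real (\<lambda>x. flat_exp (3/4 - x))"
    using smooth_comp[OF flat_exp_smooth smooth_affine[of "-1" "3/4"]] by simp
  have "smooth_real (\<lambda>x. 1 / (flat_exp (x - 1/4) + flat_exp (3/4 - x)))"
    using smooth_inverse[OF smooth_add[OF left right]] smooth_step_denominator_pos
    by (metis less_irrefl)
  from smooth_mult[OF left this] show ?thesis unfolding smooth_step_def[abs_def] by simp
qed

lemma smooth_step_low: "x \<le> 1/4 \<Longrightarrow> smooth_step x = 0"
  by (simp add: smooth_step_def flat_exp_def)

lemma smooth_step_high: "x \<ge> 3/4 \<Longrightarrow> smooth_step x = 1"
  using smooth_step_denominator_pos[of x] by (simp add: smooth_step_def flat_exp_def)

lemma smooth_step_range: "smooth_step x \<in> {0..1}"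
  using smooth_step_denominator_pos[of x]
  by (simp add: smooth_step_def flat_exp_def divide_le_eq_1)


lemma curves_of_funcs_of: "curves_of A (funcs_of (curves_of A F)) = curves_of A F"
  unfolding curves_of_def funcs_of_def by auto

lemma gen_by_funcs_simps [simp]:
  "car (gen_by_funcs A F) = A" "curves (gen_by_funcs A F) = curves_of A F"
  "funcs (gen_by_funcs A F) = funcs_of (curves_of A F)"
  by (simp_all add: gen_by_funcs_def)

lemma gen_by_curves_simps [simp]:
  "car (gen_by_curves A C) = A" "curves (gen_by_curves A C) = curves_of A (funcs_of C)"
  "funcs (gen_by_curves A C) = funcs_of C"
  by (simp_all add: gen_by_curves_def)

lemma frolicher_gen_by_funcs: "frolicher (gen_by_funcs A F)"
  unfolding frolicher_def by (simp add: curves_of_funcs_of)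

lemma frolicher_gen_by_curves:
  assumes "\<forall>c\<in>C. \<forall>t. c t \<in> A"
  shows "frolicher (gen_by_curves A C)"
proof -
  have "C \<subseteq> curves_of A (funcs_of C)" using assms unfolding curves_of_def funcs_of_def by auto
  then have "funcs_of (curves_of A (funcs_of C)) = funcs_of C"
    unfolding funcs_of_def curves_of_def by auto
  then show ?thesis unfolding frolicher_def by simp
qed

lemma gen_by_curves_curve:
  assumes "c \<in> C" "\<forall>t. c t \<in> A"
  shows "c \<in> curves (gen_by_curves A C)"
  using assms by (auto simp: curves_of_def funcs_of_def)

lemma frolicher_curve_car: "frolicher S \<Longrightarrow> c \<in> curves S \<Longrightarrow> c t \<in> car S"
  unfolding frolicher_def curves_of_def by blast

lemma frolicher_curve_func: "frolicher S \<Longrightarrow> f \<in> funcs S \<Longrightarrow> c \<in> curves S \<Longrightarrow> smooth_real (f \<circ> c)"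
  unfolding frolicher_def funcs_of_def by blast

lemma frolicher_funcI: "frolicher S \<Longrightarrow> \<forall>c\<in>curves S. smooth_real (f \<circ> c) \<Longrightarrow> f \<in> funcs S"
  unfolding frolicher_def funcs_of_def by blast

lemma frolicher_curveI:
  "frolicher S \<Longrightarrow> \<forall>t. c t \<in> car S \<Longrightarrow> \<forall>f\<in>funcs S. smooth_real (f \<circ> c) \<Longrightarrow> c \<in> curves S"
  unfolding frolicher_def curves_of_def by blast

lemma smooth_map_curves:
  assumes "frolicher X" "frolicher W"
  shows "smooth_map X W \<phi> \<longleftrightarrow> (\<forall>x\<in>car X. \<phi> x \<in> car W) \<and> (\<forall>c\<in>curves X. \<phi> \<circ> c \<in> curves W)"
proof
  assume s: "smooth_map X W \<phi>"
  have "\<phi> \<circ> c \<in> curves W" if c: "c \<in> curves X" for c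
  proof (rule frolicher_curveI[OF assms(2)])
    show "\<forall>t. (\<phi> \<circ> c) t \<in> car W"
      using s c frolicher_curve_car[OF assms(1)] by (simp add: smooth_map_def)
    show "\<forall>f\<in>funcs W. smooth_real (f \<circ> (\<phi> \<circ> c))"
      using s c frolicher_curve_func[OF assms(1)] by (simp add: smooth_map_def o_assoc)
  qed
  then show "(\<forall>x\<in>car X. \<phi> x \<in> car W) \<and> (\<forall>c\<in>curves X. \<phi> \<circ> c \<in> curves W)"
    using s by (simp add: smooth_map_def)
next
  assume r: "(\<forall>x\<in>car X. \<phi> x \<in> car W) \<and> (\<forall>c\<in>curves X. \<phi> \<circ> c \<in> curves W)"
  have "g \<circ> \<phi> \<in> funcs X" if g: "g \<in> funcs W" for g
    using r frolicher_curve_func[OF assms(2) g]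
    by (intro frolicher_funcI[OF assms(1)]) (simp add: comp_assoc)
  then show "smooth_map X W \<phi>" using r by (simp add: smooth_map_def)
qed

lemma smooth_map_comp: "smooth_map X Y \<phi> \<Longrightarrow> smooth_map Y Z \<psi> \<Longrightarrow> smooth_map X Z (\<psi> \<circ> \<phi>)"
  unfolding smooth_map_def by (simp add: o_assoc)


lemma product_car [simp]: "car (product X Y) = car X \<times> car Y"
  by (simp add: product_def)

lemma frolicher_product: "frolicher (product X Y)"
  unfolding product_def by (rule frolicher_gen_by_funcs)

lemma product_curves:
  assumes "frolicher X" "frolicher Y"
  shows "c \<in> curves (product X Y) \<longleftrightarrow> fst \<circ> c \<in> curves X \<and> snd \<circ> c \<in> curves Y"
proof
  assume c: "c \<in> curves (product X Y)"
  then have car: "\<forall>t. c t \<in> car X \<times> car Y" by (simp add: product_def curves_of_def)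
  have gen: "smooth_real (h \<circ> c)" if "h \<in> {f \<circ> fst | f. f \<in> funcs X} \<union> {g \<circ> snd | g. g \<in> funcs Y}" for h
    using c that by (simp add: product_def curves_of_def)
  have "fst \<circ> c \<in> curves X"
    by (rule frolicher_curveI[OF assms(1)]) (use car gen in \<open>auto simp: o_assoc mem_Times_iff\<close>)
  moreover have "snd \<circ> c \<in> curves Y"
    by (rule frolicher_curveI[OF assms(2)]) (use car gen in \<open>auto simp: o_assoc mem_Times_iff\<close>)
  ultimately show "fst \<circ> c \<in> curves X \<and> snd \<circ> c \<in> curves Y" ..
next
  assume r: "fst \<circ> c \<in> curves X \<and> snd \<circ> c \<in> curves Y"
  then have "\<forall>t. c t \<in> car X \<times> car Y"
    using frolicher_curve_car[OF assms(1), of "fst \<circ> c"] frolicher_curve_car[OF assms(2), of "snd \<circ> c"]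
    by (auto simp: mem_Times_iff)
  then show "c \<in> curves (product X Y)"
    unfolding product_def gen_by_funcs_simps curves_of_def
    using r frolicher_curve_func[OF assms(1)] frolicher_curve_func[OF assms(2)]
    by (auto simp: comp_assoc)
qed

lemma unit_I_car [simp]: "car unit_I = {0..1}"
  by (simp add: unit_I_def subspace_def)

lemma frolicher_unit_I: "frolicher unit_I"
  unfolding unit_I_def subspace_def by (rule frolicher_gen_by_funcs)

lemma unit_I_curves: "c \<in> curves unit_I \<longleftrightarrow> (\<forall>t. c t \<in> {0..1}) \<and> smooth_real c"
proof
  have "id \<in> funcs real_frol"
    by (simp add: real_frol_def funcs_of_def curves_of_def)
  then show "c \<in> curves unit_I \<Longrightarrow> (\<forall>t. c t \<in> {0..1}) \<and> smooth_real c"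
    by (auto simp: unit_I_def subspace_def curves_of_def)
  assume r: "(\<forall>t. c t \<in> {0..1}) \<and> smooth_real c"
  then have "c \<in> curves_of UNIV {id}" by (simp add: curves_of_def)
  then show "c \<in> curves unit_I"
    using r by (auto simp: unit_I_def subspace_def curves_of_def real_frol_def funcs_of_def)
qed

lemma flat_I_car [simp]: "car flat_I = {0..1}"
  by (simp add: flat_I_def)

lemma frolicher_flat_I: "frolicher flat_I"
  unfolding flat_I_def by (rule frolicher_gen_by_funcs)

text \<open>The bold interval has fewer structure functions, hence more curves than I.\<close>
lemma unit_I_curve_flat: "c \<in> curves unit_I \<Longrightarrow> c \<in> curves flat_I"
  using frolicher_curve_func[OF frolicher_unit_I]
  by (auto simp: flat_I_def curves_of_def unit_I_curves)

lemma product_unit_I_curve: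
  assumes "frolicher A"
  shows "\<gamma> \<in> curves (product unit_I A) \<longleftrightarrow>
           (\<forall>r. fst (\<gamma> r) \<in> {0..1}) \<and> smooth_real (\<lambda>r. fst (\<gamma> r)) \<and> snd \<circ> \<gamma> \<in> curves A"
  using product_curves[OF frolicher_unit_I assms] by (simp add: unit_I_curves o_def)

lemma product_unit_I_curve_car:
  "frolicher A \<Longrightarrow> \<gamma> \<in> curves (product unit_I A) \<Longrightarrow> snd (\<gamma> r) \<in> car A"
  using frolicher_curve_car[OF frolicher_product] by (metis mem_Times_iff product_car)

lemma product_unit_I_map_smooth:
  assumes "frolicher A" "frolicher B" "smooth_real s" "\<forall>t\<in>{0..1}. s t \<in> {0..1}" "smooth_map A B g"
  shows "smooth_map (product unit_I A) (product unit_I B) (\<lambda>(t, x). (s t, g x))"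
  unfolding smooth_map_curves[OF frolicher_product frolicher_product]
proof (intro conjI ballI)
  show "z \<in> car (product unit_I A) \<Longrightarrow> (case z of (t, x) \<Rightarrow> (s t, g x)) \<in> car (product unit_I B)" for z
    using assms(4,5) by (auto simp: smooth_map_def)
  fix \<gamma> assume "\<gamma> \<in> curves (product unit_I A)"
  then have "\<forall>r. fst (\<gamma> r) \<in> {0..1}" "smooth_real (\<lambda>r. fst (\<gamma> r))" "snd \<circ> \<gamma> \<in> curves A"
    using product_unit_I_curve[OF assms(1)] by auto
  moreover have "g \<circ> (snd \<circ> \<gamma>) \<in> curves B" if "snd \<circ> \<gamma> \<in> curves A"
    using assms(5) that smooth_map_curves[OF assms(1,2)] by blast
  ultimately show "(\<lambda>(t, x). (s t, g x)) \<circ> \<gamma> \<in> curves (product unit_I B)"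
    using smooth_comp[OF assms(3)] assms(4)
    by (simp add: product_unit_I_curve[OF assms(2)] o_def case_prod_beta)
qed

lemma snd_smooth: "frolicher A \<Longrightarrow> smooth_map (product unit_I A) A snd"
  by (simp add: smooth_map_curves[OF frolicher_product] product_unit_I_curve mem_Times_iff)

text \<open>The cut-off  m = 1 - step:  m = 1 near 0, m = 0 near 1.  Being constant near both ends, it
  is a structure function of the bold interval, so it maps curves of bold I to curves of I.\<close>
definition cutoff :: "real \<Rightarrow> real" where
  "cutoff t = 1 - smooth_step t"

lemma cutoff_range: "cutoff t \<in> {0..1}"
  using smooth_step_range[of t] by (simp add: cutoff_def)

lemma cutoff_low: "t \<le> 1/4 \<Longrightarrow> cutoff t = 1"
  by (simp add: cutoff_def smooth_step_low)

lemma cutoff_high: "t \<ge> 3/4 \<Longrightarrow> cutoff t = 0"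
  by (simp add: cutoff_def smooth_step_high)

lemma cutoff_flat_curve:
  assumes "c \<in> curves flat_I"
  shows "cutoff \<circ> c \<in> curves unit_I"
proof -
  have "smooth_real cutoff"
    using smooth_add[OF smooth_const smooth_mult[OF smooth_const smooth_step_smooth], of 1 "-1"]
    by (simp add: cutoff_def[abs_def])
  then have "cutoff \<in> funcs unit_I"
    using smooth_comp by (intro frolicher_funcI[OF frolicher_unit_I]) (auto simp: unit_I_curves o_def)
  then have "cutoff \<in> {f \<in> funcs unit_I. \<exists>\<epsilon>. 0 < \<epsilon> \<and> \<epsilon> < 1/4 \<and>
        (\<forall>s\<in>{0..<\<epsilon>}. \<forall>t\<in>{0..<\<epsilon>}. f s = f t) \<and>
        (\<forall>s\<in>{1-\<epsilon><..1}. \<forall>t\<in>{1-\<epsilon><..1}. f s = f t)}"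
    by (auto intro!: exI[of _ "1/8"] simp: cutoff_low cutoff_high)
  then have "smooth_real (cutoff \<circ> c)" using assms by (simp add: flat_I_def curves_of_def)
  then show ?thesis using cutoff_range by (simp add: unit_I_curves)
qed


lemma coproduct_car [simp]: "car (coproduct X Y) = Inl ` car X \<union> Inr ` car Y"
  by (simp add: coproduct_def)

lemma frolicher_coproduct: "frolicher X \<Longrightarrow> frolicher Y \<Longrightarrow> frolicher (coproduct X Y)"
  unfolding coproduct_def
  by (rule frolicher_gen_by_curves) (auto simp: frolicher_curve_car)

lemma coproduct_Inl_curve: "frolicher X \<Longrightarrow> c \<in> curves X \<Longrightarrow> Inl \<circ> c \<in> curves (coproduct X Y)"
  unfolding coproduct_def by (rule gen_by_curves_curve) (auto simp: frolicher_curve_car)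

lemma coproduct_Inr_curve: "frolicher Y \<Longrightarrow> c \<in> curves Y \<Longrightarrow> Inr \<circ> c \<in> curves (coproduct X Y)"
  unfolding coproduct_def by (rule gen_by_curves_curve) (auto simp: frolicher_curve_car)

lemma coproduct_smooth_map:
  assumes "frolicher X" "frolicher Y" "smooth_map X W \<phi>1" "smooth_map Y W \<phi>2"
    "\<forall>x\<in>car X. \<phi> (Inl x) = \<phi>1 x" "\<forall>y\<in>car Y. \<phi> (Inr y) = \<phi>2 y"
  shows "smooth_map (coproduct X Y) W \<phi>"
  unfolding smooth_map_def
proof (intro conjI ballI)
  show "z \<in> car (coproduct X Y) \<Longrightarrow> \<phi> z \<in> car W" for z
    using assms by (auto simp: smooth_map_def)
  fix g assume g: "g \<in> funcs W"
  have "g \<circ> \<phi> \<circ> (Inl \<circ> c) = (g \<circ> \<phi>1) \<circ> c" if "c \<in> curves X" for c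
    using assms(5) frolicher_curve_car[OF assms(1) that] by (auto simp: fun_eq_iff)
  moreover have "g \<circ> \<phi> \<circ> (Inr \<circ> c) = (g \<circ> \<phi>2) \<circ> c" if "c \<in> curves Y" for c
    using assms(6) frolicher_curve_car[OF assms(2) that] by (auto simp: fun_eq_iff)
  ultimately show "g \<circ> \<phi> \<in> funcs (coproduct X Y)"
    using frolicher_curve_func[OF assms(1)] frolicher_curve_func[OF assms(2)] assms(3,4) g
    by (auto simp: coproduct_def funcs_of_def smooth_map_def)
qed

lemma quotient_car [simp]: "car (quotient_frol X R) = car X // R"
  by (simp add: quotient_frol_def)

lemma frolicher_quotient: "frolicher X \<Longrightarrow> frolicher (quotient_frol X R)"
  unfolding quotient_frol_def
  by (rule frolicher_gen_by_curves) (auto intro: quotientI simp: frolicher_curve_car)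

lemma quotient_curve:
  "frolicher X \<Longrightarrow> c \<in> curves X \<Longrightarrow> (\<lambda>t. R `` {c t}) \<in> curves (quotient_frol X R)"
  unfolding quotient_frol_def
  by (rule gen_by_curves_curve) (auto intro: quotientI simp: frolicher_curve_car)

lemma quotient_smooth_map:
  assumes "frolicher X" "smooth_map X W \<phi>" "\<forall>x\<in>car X. \<Phi> (R `` {x}) = \<phi> x"
  shows "smooth_map (quotient_frol X R) W \<Phi>"
  unfolding smooth_map_def
proof (intro conjI ballI)
  show "z \<in> car (quotient_frol X R) \<Longrightarrow> \<Phi> z \<in> car W" for z
    using assms by (auto simp: smooth_map_def quotient_def)
  fix g assume g: "g \<in> funcs W"
  have "g \<circ> \<Phi> \<circ> (\<lambda>t. R `` {c t}) = (g \<circ> \<phi>) \<circ> c" if "c \<in> curves X" for c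
    using assms(3) frolicher_curve_car[OF assms(1) that] by (auto simp: fun_eq_iff)
  then show "g \<circ> \<Phi> \<in> funcs (quotient_frol X R)"
    using frolicher_curve_func[OF assms(1)] assms(2) g
    by (auto simp: quotient_frol_def funcs_of_def smooth_map_def)
qed

definition quot_lift :: "('a \<Rightarrow> 'w) \<Rightarrow> 'a set \<Rightarrow> 'w" where
  "quot_lift \<psi> Z = \<psi> (SOME e. e \<in> Z)"

lemma quot_lift_class:
  assumes "equiv S R" "\<forall>(a, b)\<in>R. \<psi> a = \<psi> b" "e \<in> S"
  shows "quot_lift \<psi> (R `` {e}) = \<psi> e"
proof -
  have "(SOME e'. e' \<in> R `` {e}) \<in> R `` {e}"
    using equiv_class_self[OF assms(1,3)] by (rule someI)
  then show ?thesis using assms(2) unfolding quot_lift_def by auto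
qed

lemma quot_lift_smooth:
  assumes "frolicher X" "equiv (car X) R" "\<forall>(a, b)\<in>R. \<psi> a = \<psi> b" "smooth_map X W \<psi>"
  shows "smooth_map (quotient_frol X R) W (quot_lift \<psi>)"
  using quotient_smooth_map[OF assms(1,4)] quot_lift_class[OF assms(2,3)] by blast

lemma equiv_closure_equiv:
  assumes "R0 \<subseteq> S \<times> S"
  shows "equiv S (equiv_closure S R0)"
proof -
  let ?T = "(R0 \<union> R0\<inverse>)\<^sup>+"
  have "?T \<subseteq> S \<times> S" using assms by (intro trancl_subset_Sigma) auto
  moreover have "sym ?T" by (intro sym_trancl) (auto simp: sym_def)
  moreover have "trans ?T" by (rule trans_trancl)
  ultimately show ?thesis
    unfolding equiv_closure_def equiv_def refl_on_def sym_def trans_def by blast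
qed

lemma collapse_equiv: "B \<subseteq> C \<Longrightarrow> equiv C (Id_on C \<union> B \<times> B)"
  by (intro equivI) (auto simp: refl_on_def sym_def trans_def)


lemma pointed_homotopicE:
  assumes "pointed_homotopic A a0 W w0 \<phi> \<psi>"
  obtains H where "smooth_map (product unit_I A) W H"
    "\<forall>x\<in>car A. H (0, x) = \<phi> x \<and> H (1, x) = \<psi> x" "\<forall>t\<in>{0..1}. H (t, a0) = w0"
  using assms unfolding pointed_homotopic_def by blast

lemma homotopy_reparam_smooth:
  assumes "frolicher A" "smooth_map (product unit_I A) W H" "smooth_real s" "\<forall>t\<in>{0..1}. s t \<in> {0..1}"
  shows "smooth_map (product unit_I A) W (\<lambda>(t, x). H (s t, x))"
proof -
  have "smooth_map A A id" by (simp add: smooth_map_def)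
  then have "smooth_map (product unit_I A) W (H \<circ> (\<lambda>(t, x). (s t, id x)))"
    by (intro smooth_map_comp[OF _ assms(2)] product_unit_I_map_smooth assms)
  then show ?thesis by (simp add: o_def case_prod_unfold)
qed

lemma homotopy_glue_smooth:
  assumes "frolicher A" "frolicher W" "a < b"
    "smooth_map (product unit_I A) W H1" "smooth_map (product unit_I A) W H2"
    "\<And>t x. t \<in> {0..1} \<Longrightarrow> x \<in> car A \<Longrightarrow> t < b \<Longrightarrow> H (t, x) = H1 (t, x)"
    "\<And>t x. t \<in> {0..1} \<Longrightarrow> x \<in> car A \<Longrightarrow> a < t \<Longrightarrow> H (t, x) = H2 (t, x)"
  shows "smooth_map (product unit_I A) W H"
proof -
  have H_car: "H z \<in> car W" if "z \<in> car (product unit_I A)" for z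
    using that assms(3-7) by (cases "fst z < b") (auto simp: smooth_map_def)
  moreover have "H \<circ> \<gamma> \<in> curves W" if \<gamma>: "\<gamma> \<in> curves (product unit_I A)" for \<gamma>
  proof (rule frolicher_curveI[OF assms(2)])
    have in_car: "fst (\<gamma> r) \<in> {0..1}" "snd (\<gamma> r) \<in> car A" for r
      using \<gamma> product_unit_I_curve[OF assms(1)] product_unit_I_curve_car[OF assms(1)] by auto
    have cont: "continuous_on UNIV (\<lambda>r. fst (\<gamma> r))"
      using \<gamma> product_unit_I_curve[OF assms(1)] smooth_continuous by blast
    have Hi: "Hi \<circ> \<gamma> \<in> curves W" if "smooth_map (product unit_I A) W Hi" for Hi
      using that \<gamma> smooth_map_curves[OF frolicher_product assms(2)] by blast
    show "\<forall>t. (H \<circ> \<gamma>) t \<in> car W"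
      using frolicher_curve_car[OF frolicher_product \<gamma>] H_car by simp
    show "\<forall>g\<in>funcs W. smooth_real (g \<circ> (H \<circ> \<gamma>))"
    proof
      fix g assume g: "g \<in> funcs W"
      show "smooth_real (g \<circ> (H \<circ> \<gamma>))"
      proof (rule smooth_local[where U="{r. fst (\<gamma> r) < b}" and V="{r. a < fst (\<gamma> r)}"])
        show "open {r. fst (\<gamma> r) < b}" by (rule open_Collect_less[OF cont continuous_on_const])
        show "open {r. a < fst (\<gamma> r)}" by (rule open_Collect_less[OF continuous_on_const cont])
        show "{r. fst (\<gamma> r) < b} \<union> {r. a < fst (\<gamma> r)} = UNIV" using assms(3) by auto
        show "smooth_real (g \<circ> (H1 \<circ> \<gamma>))" by (rule frolicher_curve_func[OF assms(2) g Hi[OF assms(4)]])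
        show "smooth_real (g \<circ> (H2 \<circ> \<gamma>))" by (rule frolicher_curve_func[OF assms(2) g Hi[OF assms(5)]])
        show "\<forall>r\<in>{r. fst (\<gamma> r) < b}. (g \<circ> (H \<circ> \<gamma>)) r = (g \<circ> (H1 \<circ> \<gamma>)) r"
        proof
          fix r assume "r \<in> {r. fst (\<gamma> r) < b}"
          then show "(g \<circ> (H \<circ> \<gamma>)) r = (g \<circ> (H1 \<circ> \<gamma>)) r"
            using assms(6)[of "fst (\<gamma> r)" "snd (\<gamma> r)"] in_car[of r] by simp
        qed
        show "\<forall>r\<in>{r. a < fst (\<gamma> r)}. (g \<circ> (H \<circ> \<gamma>)) r = (g \<circ> (H2 \<circ> \<gamma>)) r"
        proof
          fix r assume "r \<in> {r. a < fst (\<gamma> r)}"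
          then show "(g \<circ> (H \<circ> \<gamma>)) r = (g \<circ> (H2 \<circ> \<gamma>)) r"
            using assms(7)[of "fst (\<gamma> r)" "snd (\<gamma> r)"] in_car[of r] by simp
        qed
      qed
    qed
  qed
  ultimately show ?thesis unfolding smooth_map_curves[OF frolicher_product assms(2)] by blast
qed

lemma homotopic_refl:
  assumes "frolicher A" "\<phi> \<in> pointed_maps A a0 W w0"
  shows "pointed_homotopic A a0 W w0 \<phi> \<phi>"
proof -
  have "smooth_map (product unit_I A) W (\<phi> \<circ> snd)"
    using assms by (intro smooth_map_comp[OF snd_smooth]) (auto simp: pointed_maps_def)
  then show ?thesis using assms(2) unfolding pointed_homotopic_def pointed_maps_def
    by (intro exI[of _ "\<phi> \<circ> snd"]) auto
qed

lemma homotopic_sym: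
  assumes "frolicher A" "pointed_homotopic A a0 W w0 \<phi> \<psi>"
  shows "pointed_homotopic A a0 W w0 \<psi> \<phi>"
proof -
  obtain H where H: "smooth_map (product unit_I A) W H"
    "\<forall>x\<in>car A. H (0, x) = \<phi> x \<and> H (1, x) = \<psi> x" "\<forall>t\<in>{0..1}. H (t, a0) = w0"
    using assms(2) by (rule pointed_homotopicE)
  have "smooth_map (product unit_I A) W (\<lambda>(t, x). H (1 - t, x))"
    using smooth_affine[of "-1" 1] H(1)
    by (intro homotopy_reparam_smooth[OF assms(1)]) (simp_all add: pointed_homotopic_def)
  then show ?thesis using H(2,3) unfolding pointed_homotopic_def
    by (intro exI[of _ "\<lambda>(t, x). H (1 - t, x)"]) auto
qed

text \<open>Transitivity: concatenate the two homotopies, each reparametrized by the smooth step so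
  that they are stationary near the junction t = 1/2; the result is smooth by gluing.\<close>
lemma homotopic_trans:
  assumes "frolicher A" "frolicher W" "pointed_homotopic A a0 W w0 \<phi> \<psi>"
    "pointed_homotopic A a0 W w0 \<psi> \<theta>"
  shows "pointed_homotopic A a0 W w0 \<phi> \<theta>"
proof -
  obtain H1 where H1: "smooth_map (product unit_I A) W H1"
    "\<forall>x\<in>car A. H1 (0, x) = \<phi> x \<and> H1 (1, x) = \<psi> x" "\<forall>t\<in>{0..1}. H1 (t, a0) = w0"
    using assms(3) by (rule pointed_homotopicE)
  obtain H2 where H2: "smooth_map (product unit_I A) W H2"
    "\<forall>x\<in>car A. H2 (0, x) = \<psi> x \<and> H2 (1, x) = \<theta> x" "\<forall>t\<in>{0..1}. H2 (t, a0) = w0"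
    using assms(4) by (rule pointed_homotopicE)
  define G1 where "G1 = (\<lambda>(t::real, x). H1 (smooth_step (2 * t), x))"
  define G2 where "G2 = (\<lambda>(t::real, x). H2 (smooth_step (2 * t - 1), x))"
  define H where "H = (\<lambda>(t::real, x). if t \<le> 1/2 then G1 (t, x) else G2 (t, x))"
  have G1: "smooth_map (product unit_I A) W G1"
    unfolding G1_def using smooth_comp[OF smooth_step_smooth smooth_affine[of 2 0]] smooth_step_range
    by (intro homotopy_reparam_smooth[OF assms(1) H1(1)]) simp_all
  have G2: "smooth_map (product unit_I A) W G2"
    unfolding G2_def using smooth_comp[OF smooth_step_smooth smooth_affine[of 2 "-1"]] smooth_step_range
    by (intro homotopy_reparam_smooth[OF assms(1) H2(1)]) simp_all
  have "smooth_map (product unit_I A) W H"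
  proof (rule homotopy_glue_smooth[OF assms(1,2) _ G1 G2, of "3/8" "5/8"])
    fix t x assume x: "x \<in> car A"
    show "t < 5/8 \<Longrightarrow> H (t, x) = G1 (t, x)"
      using x H1(2) H2(2) by (auto simp: H_def G1_def G2_def smooth_step_low smooth_step_high)
    show "3/8 < t \<Longrightarrow> H (t, x) = G2 (t, x)"
      using x H1(2) H2(2) by (auto simp: H_def G1_def G2_def smooth_step_low smooth_step_high)
  qed simp
  moreover have "\<forall>x\<in>car A. H (0, x) = \<phi> x \<and> H (1, x) = \<theta> x"
    using H1(2) H2(2) by (simp add: H_def G1_def G2_def smooth_step_low smooth_step_high)
  moreover have "\<forall>t\<in>{0..1}. H (t, a0) = w0"
    using H1(3) H2(3) smooth_step_range by (simp add: H_def G1_def G2_def)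
  ultimately show ?thesis unfolding pointed_homotopic_def by blast
qed

lemma homotopic_precomp:
  assumes "frolicher A" "frolicher B" "g \<in> pointed_maps A a0 B b0"
    "pointed_homotopic B b0 W w0 \<phi> \<psi>"
  shows "pointed_homotopic A a0 W w0 (\<phi> \<circ> g) (\<psi> \<circ> g)"
proof -
  obtain H where H: "smooth_map (product unit_I B) W H"
    "\<forall>x\<in>car B. H (0, x) = \<phi> x \<and> H (1, x) = \<psi> x" "\<forall>t\<in>{0..1}. H (t, b0) = w0"
    using assms(4) by (rule pointed_homotopicE)
  have g: "smooth_map A B g" "g a0 = b0" using assms(3) by (auto simp: pointed_maps_def)
  have "smooth_map (product unit_I A) W (H \<circ> (\<lambda>(t, x). (id t, g x)))"
    using smooth_id
    by (intro smooth_map_comp[OF product_unit_I_map_smooth H(1)] assms(1,2) g(1)) (auto simp: id_def)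
  moreover have "\<forall>x\<in>car A. g x \<in> car B" using g(1) by (simp add: smooth_map_def)
  ultimately show ?thesis using H(2,3) g(2) unfolding pointed_homotopic_def
    by (intro exI[of _ "H \<circ> (\<lambda>(t, x). (id t, g x))"]) auto
qed

lemma const_pointed: "frolicher A \<Longrightarrow> w0 \<in> car W \<Longrightarrow> (\<lambda>_. w0) \<in> pointed_maps A a0 W w0"
  by (auto intro!: frolicher_funcI simp: pointed_maps_def smooth_map_def o_def smooth_const)

lemma pointed_maps_comp:
  "g \<in> pointed_maps A a0 B b0 \<Longrightarrow> \<phi> \<in> pointed_maps B b0 W w0 \<Longrightarrow> \<phi> \<circ> g \<in> pointed_maps A a0 W w0"
  by (auto simp: pointed_maps_def intro: smooth_map_comp)


lemma htpy_class_eq: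
  assumes "frolicher A" "frolicher W" "pointed_homotopic A a0 W w0 \<phi> \<psi>"
  shows "htpy_class A a0 W w0 \<phi> = htpy_class A a0 W w0 \<psi>"
proof -
  have "pointed_homotopic A a0 W w0 \<phi> \<theta> \<longleftrightarrow> pointed_homotopic A a0 W w0 \<psi> \<theta>" for \<theta>
    using homotopic_trans[OF assms(1,2)] homotopic_sym[OF assms(1) assms(3)] assms(3) by metis
  then show ?thesis unfolding htpy_class_def by simp
qed

lemma htpy_class_eq_iff:
  assumes "frolicher A" "frolicher W" "\<phi> \<in> pointed_maps A a0 W w0"
  shows "htpy_class A a0 W w0 \<phi> = htpy_class A a0 W w0 \<psi> \<longleftrightarrow> pointed_homotopic A a0 W w0 \<psi> \<phi>"
proof
  assume "htpy_class A a0 W w0 \<phi> = htpy_class A a0 W w0 \<psi>"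
  moreover have "\<phi> \<in> htpy_class A a0 W w0 \<phi>"
    using homotopic_refl[OF assms(1,3)] assms(3) by (simp add: htpy_class_def)
  ultimately show "pointed_homotopic A a0 W w0 \<psi> \<phi>" by (simp add: htpy_class_def)
qed (rule htpy_class_eq[OF assms(1,2), symmetric])

lemma htpy_class_cong:
  "\<forall>x\<in>car A. \<phi> x = \<phi>' x \<Longrightarrow> htpy_class A a0 W w0 \<phi> = htpy_class A a0 W w0 \<phi>'"
  unfolding htpy_class_def pointed_homotopic_def by auto

lemma induced_htpy_class:
  assumes "frolicher A" "frolicher B" "frolicher W"
    "g \<in> pointed_maps A a0 B b0" "\<phi> \<in> pointed_maps B b0 W w0"
  shows "induced A a0 W w0 g (htpy_class B b0 W w0 \<phi>) = htpy_class A a0 W w0 (\<phi> \<circ> g)"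
proof -
  define \<psi> where "\<psi> = (SOME \<psi>. \<psi> \<in> htpy_class B b0 W w0 \<phi>)"
  have "\<phi> \<in> htpy_class B b0 W w0 \<phi>"
    using homotopic_refl[OF assms(2,5)] assms(5) by (simp add: htpy_class_def)
  then have "\<psi> \<in> htpy_class B b0 W w0 \<phi>" unfolding \<psi>_def by (rule someI[where P="\<lambda>\<psi>. \<psi> \<in> _"])
  then have "pointed_homotopic A a0 W w0 (\<phi> \<circ> g) (\<psi> \<circ> g)"
    by (intro homotopic_precomp[OF assms(1,2,4)]) (simp add: htpy_class_def)
  then have "htpy_class A a0 W w0 (\<psi> \<circ> g) = htpy_class A a0 W w0 (\<phi> \<circ> g)"
    by (rule htpy_class_eq[OF assms(1,3), symmetric])
  then show ?thesis unfolding induced_def \<psi>_def .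
qed


lemma induced_trivial_iff:
  assumes "frolicher A" "frolicher B" "frolicher W" "w0 \<in> car W"
    "g \<in> pointed_maps A a0 B b0" "\<phi> \<in> pointed_maps B b0 W w0"
  shows "induced A a0 W w0 g (htpy_class B b0 W w0 \<phi>) = htpy_class A a0 W w0 (\<lambda>_. w0)
           \<longleftrightarrow> pointed_homotopic A a0 W w0 (\<phi> \<circ> g) (\<lambda>_. w0)"
  using induced_htpy_class[OF assms(1-3,5,6)] htpy_class_eq_iff[OF assms(1,3) const_pointed[OF assms(1,4)]]
    homotopic_sym[OF assms(1)] by metis


section \<open>The flattened mapping cone\<close>

context
  fixes X :: "'a frol" and Y :: "'b frol" and f :: "'a \<Rightarrow> 'b" and x0 :: 'a
  assumes frX: "frolicher X" and frY: "frolicher Y" and x0: "x0 \<in> car X"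
    and f_smooth: "smooth_map X Y f"
begin

lemma cyl_pre_car: "car (cyl_pre X Y) = Inl ` ({0..1} \<times> car X) \<union> Inr ` car Y"
  by (simp add: cyl_pre_def)

lemma frolicher_cyl_pre: "frolicher (cyl_pre X Y)"
  unfolding cyl_pre_def by (rule frolicher_coproduct[OF frolicher_product frY])

lemma frolicher_mapping_cyl: "frolicher (mapping_cyl X Y f)"
  unfolding mapping_cyl_def by (rule frolicher_quotient[OF frolicher_cyl_pre])

lemma frolicher_mapping_cone: "frolicher (mapping_cone X Y f x0)"
  unfolding mapping_cone_def by (rule frolicher_quotient[OF frolicher_mapping_cyl])

lemma cyl_rel_equiv: "equiv (car (cyl_pre X Y)) (cyl_rel X Y f)"
  unfolding cyl_rel_def
  using f_smooth by (intro equiv_closure_equiv) (auto simp: cyl_pre_car smooth_map_def)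

lemma cyl_class_car: "e \<in> car (cyl_pre X Y) \<Longrightarrow> cyl_class X Y f e \<in> car (mapping_cyl X Y f)"
  by (simp add: mapping_cyl_def cyl_class_def quotientI)

lemma cone_base_car: "cone_base X Y f x0 \<subseteq> car (mapping_cyl X Y f)"
  unfolding cone_base_def using x0 by (auto intro!: cyl_class_car simp: cyl_pre_car)

lemma cone_rel_equiv: "equiv (car (mapping_cyl X Y f)) (cone_rel X Y f x0)"
  unfolding cone_rel_def by (rule collapse_equiv[OF cone_base_car])

lemma cyl_class_glue: "x \<in> car X \<Longrightarrow> cyl_class X Y f (Inl (1, x)) = cyl_class X Y f (Inr (f x))"
  unfolding cyl_class_def
  by (rule equiv_class_eq[OF cyl_rel_equiv]) (auto simp: cyl_rel_def equiv_closure_def)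

lemma cone_base_class:
  "A \<in> cone_base X Y f x0 \<Longrightarrow> cone_rel X Y f x0 `` {A} = cone_pt X Y f x0"
  unfolding cone_pt_def using x0
  by (intro equiv_class_eq[OF cone_rel_equiv]) (auto simp: cone_rel_def cone_base_def)

definition cone_homotopy :: "real \<times> 'a \<Rightarrow> ((real \<times> 'a) + 'b) set set" where
  "cone_homotopy = (\<lambda>(t, x). cone_rel X Y f x0 `` {cyl_class X Y f (Inl (t, x))})"

lemma cone_homotopy_smooth: "smooth_map (product unit_I X) (mapping_cone X Y f x0) cone_homotopy"
  unfolding smooth_map_curves[OF frolicher_product frolicher_mapping_cone]
proof (intro conjI ballI)
  show "z \<in> car (product unit_I X) \<Longrightarrow> cone_homotopy z \<in> car (mapping_cone X Y f x0)" for z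
    unfolding cone_homotopy_def mapping_cone_def quotient_car
    by (auto intro!: quotientI cyl_class_car simp: cyl_pre_car)
  fix \<gamma> assume "\<gamma> \<in> curves (product unit_I X)"
  then have "\<gamma> \<in> curves (product flat_I X)"
    unfolding product_curves[OF frolicher_unit_I frX] product_curves[OF frolicher_flat_I frX]
    by (auto intro: unit_I_curve_flat)
  then have "Inl \<circ> \<gamma> \<in> curves (cyl_pre X Y)"
    unfolding cyl_pre_def by (rule coproduct_Inl_curve[OF frolicher_product])
  then have "(\<lambda>t. cyl_rel X Y f `` {(Inl \<circ> \<gamma>) t}) \<in> curves (mapping_cyl X Y f)"
    unfolding mapping_cyl_def by (rule quotient_curve[OF frolicher_cyl_pre])
  from quotient_curve[OF frolicher_mapping_cyl this, of "cone_rel X Y f x0"]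
  show "cone_homotopy \<circ> \<gamma> \<in> curves (mapping_cone X Y f x0)"
    by (simp add: mapping_cone_def cone_homotopy_def cyl_class_def o_def case_prod_beta)
qed

lemma cone_homotopy_boundary:
  "x \<in> car X \<Longrightarrow> cone_homotopy (0, x) = cone_pt X Y f x0"
  "t \<in> {0..1} \<Longrightarrow> cone_homotopy (t, x0) = cone_pt X Y f x0"
  "x \<in> car X \<Longrightarrow> cone_homotopy (1, x) = cone_incl X Y f x0 (f x)"
  by (auto intro!: cone_base_class simp: cone_homotopy_def cone_base_def cone_incl_def cyl_class_glue)

lemma cone_incl_pointed: "cone_incl X Y f x0 \<in> pointed_maps Y (f x0) (mapping_cone X Y f x0) (cone_pt X Y f x0)"
  unfolding pointed_maps_def smooth_map_curves[OF frY frolicher_mapping_cone]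
proof (intro CollectI conjI ballI)
  show "y \<in> car Y \<Longrightarrow> cone_incl X Y f x0 y \<in> car (mapping_cone X Y f x0)" for y
    unfolding cone_incl_def mapping_cone_def quotient_car
    by (rule quotientI, rule cyl_class_car) (simp add: cyl_pre_car)
  show "cone_incl X Y f x0 (f x0) = cone_pt X Y f x0"
    using cone_homotopy_boundary(2)[of 1] cone_homotopy_boundary(3)[OF x0] by simp
  fix c assume "c \<in> curves Y"
  then have "Inr \<circ> c \<in> curves (cyl_pre X Y)"
    unfolding cyl_pre_def by (rule coproduct_Inr_curve[OF frY])
  then have "(\<lambda>t. cyl_rel X Y f `` {(Inr \<circ> c) t}) \<in> curves (mapping_cyl X Y f)"
    unfolding mapping_cyl_def by (rule quotient_curve[OF frolicher_cyl_pre])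
  from quotient_curve[OF frolicher_mapping_cyl this, of "cone_rel X Y f x0"]
  show "cone_incl X Y f x0 \<circ> c \<in> curves (mapping_cone X Y f x0)"
    by (simp add: mapping_cone_def cone_incl_def cyl_class_def o_def)
qed

lemma cone_incl_comp_null:
  assumes "\<Phi> \<in> pointed_maps (mapping_cone X Y f x0) (cone_pt X Y f x0) W w0"
  shows "pointed_homotopic X x0 W w0 (\<lambda>_. w0) (\<Phi> \<circ> cone_incl X Y f x0 \<circ> f)"
  unfolding pointed_homotopic_def
proof (intro exI conjI)
  show "smooth_map (product unit_I X) W (\<Phi> \<circ> cone_homotopy)"
    using assms cone_homotopy_smooth smooth_map_comp by (auto simp: pointed_maps_def)
  show "\<forall>x\<in>car X. (\<Phi> \<circ> cone_homotopy) (0, x) = w0 \<and> (\<Phi> \<circ> cone_homotopy) (1, x) = (\<Phi> \<circ> cone_incl X Y f x0 \<circ> f) x"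
    "\<forall>t\<in>{0..1}. (\<Phi> \<circ> cone_homotopy) (t, x0) = w0"
    using assms cone_homotopy_boundary by (simp_all add: pointed_maps_def)
qed

end


section \<open>Extending a map over the cone\<close>

definition cyl_ext :: "('b \<Rightarrow> 'w) \<Rightarrow> (real \<times> 'a \<Rightarrow> 'w) \<Rightarrow> ((real \<times> 'a) + 'b) \<Rightarrow> 'w" where
  "cyl_ext \<chi> H e = (case e of Inl (t, x) \<Rightarrow> H (cutoff t, x) | Inr y \<Rightarrow> \<chi> y)"

definition cone_ext :: "('b \<Rightarrow> 'w) \<Rightarrow> (real \<times> 'a \<Rightarrow> 'w) \<Rightarrow> ((real \<times> 'a) + 'b) set set \<Rightarrow> 'w" where
  "cone_ext \<chi> H = quot_lift (quot_lift (cyl_ext \<chi> H))"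

context
  fixes X :: "'a frol" and Y :: "'b frol" and f :: "'a \<Rightarrow> 'b" and x0 :: 'a
    and W :: "'w frol" and w0 :: 'w and \<chi> :: "'b \<Rightarrow> 'w" and H :: "real \<times> 'a \<Rightarrow> 'w"
  assumes frX: "frolicher X" and frY: "frolicher Y" and x0: "x0 \<in> car X"
    and f_smooth: "smooth_map X Y f" and frW: "frolicher W"
    and \<chi>_smooth: "smooth_map Y W \<chi>"
    and H_smooth: "smooth_map (product unit_I X) W H"
    and H_ends: "\<forall>x\<in>car X. H (0, x) = \<chi> (f x) \<and> H (1, x) = w0"
    and H_x0: "\<forall>t\<in>{0..1}. H (t, x0) = w0"
begin

lemma cyl_ext_respects: "\<forall>(a, b)\<in>cyl_rel X Y f. cyl_ext \<chi> H a = cyl_ext \<chi> H b"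
proof -
  let ?R0 = "{(Inl (1, x), Inr (f x)) | x. x \<in> car X}"
  have gen: "cyl_ext \<chi> H a = cyl_ext \<chi> H b" if "(a, b) \<in> ?R0 \<union> ?R0\<inverse>" for a b
    using that H_ends by (auto simp: cyl_ext_def cutoff_high)
  have "cyl_ext \<chi> H a = cyl_ext \<chi> H b" if "(a, b) \<in> (?R0 \<union> ?R0\<inverse>)\<^sup>+" for a b
    using that
  proof (induction rule: trancl_induct)
    case (base b)
    then show ?case by (rule gen)
  next
    case (step b c)
    then show ?case using gen[of b c] by simp
  qed
  then show ?thesis unfolding cyl_rel_def equiv_closure_def by auto
qed

lemma cyl_ext_class: "e \<in> car (cyl_pre X Y) \<Longrightarrow> quot_lift (cyl_ext \<chi> H) (cyl_class X Y f e) = cyl_ext \<chi> H e"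
  using quot_lift_class[OF cyl_rel_equiv[OF frX frY x0 f_smooth] cyl_ext_respects]
  by (simp add: cyl_class_def)

lemma cyl_ext_cone_base:
  assumes "A \<in> cone_base X Y f x0"
  shows "quot_lift (cyl_ext \<chi> H) A = w0"
proof -
  from assms consider (bottom) x where "x \<in> car X" "A = cyl_class X Y f (Inl (0, x))"
    | (basepoint) t where "t \<in> {0..1}" "A = cyl_class X Y f (Inl (t, x0))"
    unfolding cone_base_def by blast
  then show ?thesis
  proof cases
    case bottom
    then show ?thesis using H_ends
      by (simp add: cyl_ext_class cyl_pre_car[OF frX frY x0 f_smooth] cyl_ext_def cutoff_low)
  next
    case basepoint
    then show ?thesis using x0 H_x0 cutoff_range[of t]
      by (simp add: cyl_ext_class cyl_pre_car[OF frX frY x0 f_smooth] cyl_ext_def)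
  qed
qed

lemma cyl_ext_respects_cone: "\<forall>(A, B)\<in>cone_rel X Y f x0. quot_lift (cyl_ext \<chi> H) A = quot_lift (cyl_ext \<chi> H) B"
  unfolding cone_rel_def using cyl_ext_cone_base by auto

lemma cone_ext_class:
  "e \<in> car (cyl_pre X Y) \<Longrightarrow> cone_ext \<chi> H (cone_rel X Y f x0 `` {cyl_class X Y f e}) = cyl_ext \<chi> H e"
  unfolding cone_ext_def
  by (simp add: quot_lift_class[OF cone_rel_equiv[OF frX frY x0 f_smooth] cyl_ext_respects_cone]
      cyl_class_car[OF frX frY x0 f_smooth] cyl_ext_class)

lemma cyl_ext_smooth: "smooth_map (cyl_pre X Y) W (cyl_ext \<chi> H)"
  unfolding cyl_pre_def
proof (rule coproduct_smooth_map[OF frolicher_product frY _ \<chi>_smooth])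
  show "\<forall>z\<in>car (product flat_I X). cyl_ext \<chi> H (Inl z) = (\<lambda>(t, x). H (cutoff t, x)) z"
    "\<forall>y\<in>car Y. cyl_ext \<chi> H (Inr y) = \<chi> y"
    by (auto simp: cyl_ext_def)
  show "smooth_map (product flat_I X) W (\<lambda>(t, x). H (cutoff t, x))"
    unfolding smooth_map_curves[OF frolicher_product frW]
  proof (intro conjI ballI)
    show "z \<in> car (product flat_I X) \<Longrightarrow> (case z of (t, x) \<Rightarrow> H (cutoff t, x)) \<in> car W" for z
      using H_smooth cutoff_range by (auto simp: smooth_map_def)
    fix \<gamma> assume "\<gamma> \<in> curves (product flat_I X)"
    then have "cutoff \<circ> (fst \<circ> \<gamma>) \<in> curves unit_I" "snd \<circ> \<gamma> \<in> curves X"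
      using cutoff_flat_curve product_curves[OF frolicher_flat_I frX] by auto
    then have "(\<lambda>r. (cutoff (fst (\<gamma> r)), snd (\<gamma> r))) \<in> curves (product unit_I X)"
      by (simp add: product_curves[OF frolicher_unit_I frX] o_def)
    then have "H \<circ> (\<lambda>r. (cutoff (fst (\<gamma> r)), snd (\<gamma> r))) \<in> curves W"
      using H_smooth unfolding smooth_map_curves[OF frolicher_product frW] by blast
    then show "(\<lambda>(t, x). H (cutoff t, x)) \<circ> \<gamma> \<in> curves W" by (simp add: o_def case_prod_beta)
  qed
qed

lemma cone_ext_pointed: "cone_ext \<chi> H \<in> pointed_maps (mapping_cone X Y f x0) (cone_pt X Y f x0) W w0"
proof -
  have "smooth_map (mapping_cyl X Y f) W (quot_lift (cyl_ext \<chi> H))"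
    unfolding mapping_cyl_def
    by (rule quot_lift_smooth[OF frolicher_cyl_pre[OF frX frY x0 f_smooth]
          cyl_rel_equiv[OF frX frY x0 f_smooth] cyl_ext_respects cyl_ext_smooth])
  then have "smooth_map (mapping_cone X Y f x0) W (cone_ext \<chi> H)"
    unfolding mapping_cone_def cone_ext_def
    by (rule quot_lift_smooth[OF frolicher_mapping_cyl[OF frX frY x0 f_smooth]
          cone_rel_equiv[OF frX frY x0 f_smooth] cyl_ext_respects_cone])
  moreover have "cone_ext \<chi> H (cone_pt X Y f x0) = w0"
    unfolding cone_pt_def using cone_ext_class[of "Inl (0, x0)"] x0 H_ends
    by (simp add: cyl_pre_car[OF frX frY x0 f_smooth] cyl_ext_def cutoff_low)
  ultimately show ?thesis by (simp add: pointed_maps_def)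
qed

lemma cone_ext_incl: "y \<in> car Y \<Longrightarrow> cone_ext \<chi> H (cone_incl X Y f x0 y) = \<chi> y"
  unfolding cone_incl_def using cone_ext_class[of "Inr y"]
  by (simp add: cyl_pre_car[OF frX frY x0 f_smooth] cyl_ext_def)

lemma cone_ext_induced:
  "induced Y (f x0) W w0 (cone_incl X Y f x0) (htpy_class (mapping_cone X Y f x0) (cone_pt X Y f x0) W w0 (cone_ext \<chi> H))
     = htpy_class Y (f x0) W w0 \<chi>"
proof -
  have "induced Y (f x0) W w0 (cone_incl X Y f x0) (htpy_class (mapping_cone X Y f x0) (cone_pt X Y f x0) W w0 (cone_ext \<chi> H))
      = htpy_class Y (f x0) W w0 (cone_ext \<chi> H \<circ> cone_incl X Y f x0)"
    by (rule induced_htpy_class[OF frY frolicher_mapping_cone[OF frX frY x0 f_smooth] frW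
          cone_incl_pointed[OF frX frY x0 f_smooth] cone_ext_pointed])
  also have "\<dots> = htpy_class Y (f x0) W w0 \<chi>"
    by (rule htpy_class_cong) (simp add: cone_ext_incl)
  finally show ?thesis .
qed

end


theorem lemma6:
  fixes X :: "'a frol" and Y :: "'b frol" and W :: "'w frol"
    and f :: "'a \<Rightarrow> 'b" and x0 :: 'a and y0 :: 'b and w0 :: 'w
  assumes "frolicher X" and "frolicher Y" and "frolicher W"
    and "x0 \<in> car X" and "y0 \<in> car Y" and "w0 \<in> car W"
    and "smooth_map X Y f" and "f x0 = y0"
  shows "induced Y y0 W w0 (cone_incl X Y f x0)
            ` htpy_set (mapping_cone X Y f x0) (cone_pt X Y f x0) W w0
         = {K \<in> htpy_set Y y0 W w0.
              induced X x0 W w0 f K = htpy_class X x0 W w0 (\<lambda>_. w0)}"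
proof -
  note frX = assms(1) and frY = assms(2) and frW = assms(3) and x0 = assms(4)
    and w0 = assms(6) and f_smooth = assms(7) and fx0 = assms(8)
  let ?T = "mapping_cone X Y f x0" and ?pt = "cone_pt X Y f x0" and ?l = "cone_incl X Y f x0"
  have l: "?l \<in> pointed_maps Y y0 ?T ?pt"
    using cone_incl_pointed[OF frX frY x0 f_smooth] fx0 by simp
  have f: "f \<in> pointed_maps X x0 Y y0" using f_smooth fx0 by (simp add: pointed_maps_def)
  note l_star = induced_htpy_class[OF frY frolicher_mapping_cone[OF frX frY x0 f_smooth] frW l]
  note f_star_trivial = induced_trivial_iff[OF frX frY frW w0 f]
  show ?thesis
  proof (intro set_eqI iffI)
    fix K assume "K \<in> induced Y y0 W w0 ?l ` htpy_set ?T ?pt W w0"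
    then obtain \<Phi> where \<Phi>: "\<Phi> \<in> pointed_maps ?T ?pt W w0" and K: "K = htpy_class Y y0 W w0 (\<Phi> \<circ> ?l)"
      unfolding htpy_set_def using l_star by blast
    have "pointed_homotopic X x0 W w0 (\<Phi> \<circ> ?l \<circ> f) (\<lambda>_. w0)"
      using homotopic_sym[OF frX cone_incl_comp_null[OF frX frY x0 f_smooth \<Phi>]] .
    then show "K \<in> {K \<in> htpy_set Y y0 W w0. induced X x0 W w0 f K = htpy_class X x0 W w0 (\<lambda>_. w0)}"
      using K f_star_trivial pointed_maps_comp[OF l \<Phi>] by (auto simp: htpy_set_def)
  next
    fix K assume "K \<in> {K \<in> htpy_set Y y0 W w0. induced X x0 W w0 f K = htpy_class X x0 W w0 (\<lambda>_. w0)}"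
    then obtain \<phi> where \<phi>: "\<phi> \<in> pointed_maps Y y0 W w0" and K: "K = htpy_class Y y0 W w0 \<phi>"
      and "pointed_homotopic X x0 W w0 (\<phi> \<circ> f) (\<lambda>_. w0)"
      unfolding htpy_set_def using f_star_trivial by auto
    then obtain H where H: "smooth_map (product unit_I X) W H"
      "\<forall>x\<in>car X. H (0, x) = \<phi> (f x) \<and> H (1, x) = w0" "\<forall>t\<in>{0..1}. H (t, x0) = w0"
      by (auto elim: pointed_homotopicE)
    have \<phi>_smooth: "smooth_map Y W \<phi>" using \<phi> by (simp add: pointed_maps_def)
    note ext = cone_ext_pointed[OF frX frY x0 f_smooth frW \<phi>_smooth H]
      cone_ext_induced[OF frX frY x0 f_smooth frW \<phi>_smooth H]
    show "K \<in> induced Y y0 W w0 ?l ` htpy_set ?T ?pt W w0"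
      using ext K fx0 by (auto simp: htpy_set_def)
  qed
qed

end
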